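(* Let $F$ be the semigroup freely generated by four idempotent elements $x_{00},x_{01},x_{10},x_{11}$ (i.e. $\langle x_{00},x_{01},x_{10},x_{11}\mid x_{ij}^2=x_{ij}\rangle$ in semigroups), and $G$ the semigroup freely generated by three idempotents $x_\lambda,x_\mu,x_\rho$. Let $h_1,h_2,h_3:F\to G$ be the homomorphisms given by $h_1:(x_{00},x_{01},x_{10},x_{11})\mapsto(x_\lambda,x_\mu,x_\rho,x_\rho)$, $h_2:(x_{00},x_{01},x_{10},x_{11})\mapsto(x_\lambda,x_\lambda,x_\mu,x_\rho)$, $h_3:(x_{00},x_{01},x_{10},x_{11})\mapsto(x_\lambda,x_\mu,x_\mu,x_\rho)$, and let $|R|\subseteq F$ be the subsemigroup of elements on which $h_1,h_2,h_3$ all agree. For $i\in\omega$ put $p_i=(x_{00}x_{01})^{i+1}(x_{10}x_{01})^i(x_{10}x_{11})^{i+1}$ and $q_i=(x_{11}x_{10})^{i+1}(x_{01}x_{10})^i(x_{01}x_{00})^{i+1}$ (where a zeroth power means the factor is omitted). Then $|R|$ is generated by $x_{00},x_{11},p_i,q_i$ ($i\in\omega$) and has the presentation $$\langle x_{00},x_{11},p_i,q_i\ (i\in\omega)\mid x_{00}^2=x_{00},\ x_{11}^2=x_{11},\ x_{00}p_i=p_i=p_ix_{11},\ x_{11}q_i=q_i=q_ix_{00}\rangle.$$ It has a normal form consisting of all nonempty words in these generators containing no subword $x_{00}^2$, $x_{11}^2$, $x_{00}p_i$, $p_ix_{11}$, $x_{11}q_i$, or $q_ix_{00}$.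
   Context: Semigroups are sets with an associative binary operation (no identity element assumed). *)

theory Defs
  imports Main
begin

text \<open>Semigroup presentations, rendered concretely: elements of the semigroup
  presented by generators of type 'a and relations Rel are nonempty words
  (lists) over 'a, and two words denote the same element iff they are related by
  the congruence generated by Rel (pres_eq Rel). Multiplication is concatenation.\<close>

inductive pres_eq :: "('a list \<times> 'a list) set \<Rightarrow> 'a list \<Rightarrow> 'a list \<Rightarrow> bool"
  for Rel :: "('a list \<times> 'a list) set" where
  pres_refl: "pres_eq Rel w w"
| pres_sym: "pres_eq Rel w v \<Longrightarrow> pres_eq Rel v w"
| pres_trans: "pres_eq Rel u v \<Longrightarrow> pres_eq Rel v w \<Longrightarrow> pres_eq Rel u w"
| pres_step: "(l, r) \<in> Rel \<Longrightarrow> pres_eq Rel (u @ l @ v) (u @ r @ v)"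

definition idem_rels :: "('a list \<times> 'a list) set" where
  "idem_rels = {([a, a], [a]) | a. True}"

datatype X4 = X00 | X01 | X10 | X11
datatype X3 = XL | XM | XR

abbreviation F_eq :: "X4 list \<Rightarrow> X4 list \<Rightarrow> bool" where
  "F_eq \<equiv> pres_eq idem_rels"

abbreviation G_eq :: "X3 list \<Rightarrow> X3 list \<Rightarrow> bool" where
  "G_eq \<equiv> pres_eq idem_rels"

fun h1 :: "X4 \<Rightarrow> X3" where
  "h1 X00 = XL" | "h1 X01 = XM" | "h1 X10 = XR" | "h1 X11 = XR"
fun h2 :: "X4 \<Rightarrow> X3" where
  "h2 X00 = XL" | "h2 X01 = XL" | "h2 X10 = XM" | "h2 X11 = XR"
fun h3 :: "X4 \<Rightarrow> X3" where
  "h3 X00 = XL" | "h3 X01 = XM" | "h3 X10 = XM" | "h3 X11 = XR"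

definition R_set :: "X4 list set" where
  "R_set = {w. w \<noteq> [] \<and> G_eq (map h1 w) (map h2 w) \<and> G_eq (map h2 w) (map h3 w)}"

definition pw :: "nat \<Rightarrow> X4 list" where
  "pw i = concat (replicate (i + 1) [X00, X01]) @ concat (replicate i [X10, X01])
          @ concat (replicate (i + 1) [X10, X11])"

definition qw :: "nat \<Rightarrow> X4 list" where
  "qw i = concat (replicate (i + 1) [X11, X10]) @ concat (replicate i [X01, X10])
          @ concat (replicate (i + 1) [X01, X00])"

datatype Y = A | B | P nat | Q nat

fun gen :: "Y \<Rightarrow> X4 list" where
  "gen A = [X00]" | "gen B = [X11]" | "gen (P i) = pw i" | "gen (Q i) = qw i"

definition evalY :: "Y list \<Rightarrow> X4 list" where
  "evalY u = concat (map gen u)"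

definition R_rels :: "(Y list \<times> Y list) set" where
  "R_rels = {([A, A], [A]), ([B, B], [B])}
     \<union> {([A, P i], [P i]) | i. True} \<union> {([P i, B], [P i]) | i. True}
     \<union> {([B, Q i], [Q i]) | i. True} \<union> {([Q i, A], [Q i]) | i. True}"

definition nf :: "Y list \<Rightarrow> bool" where
  "nf w \<longleftrightarrow> w \<noteq> [] \<and>
     \<not> (\<exists>u v i. w = u @ [A, A] @ v \<or> w = u @ [B, B] @ v \<or> w = u @ [A, P i] @ v
               \<or> w = u @ [P i, B] @ v \<or> w = u @ [B, Q i] @ v \<or> w = u @ [Q i, A] @ v)"

end

theory Submission
  imports Defs
begin

(* The word problem of a free semigroup on idempotents is
   solved by rd: two words are equal there iff they have the same rd (collapse every
   square a a to a).  Hence membership in |R| and equality in F become statements about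
   reduced words, and the four claims are proved as follows.
   (1) The generators x00, x11, p_i, q_i lie in |R| (for p_i by computing the three
       reduced images, for q_i by the symmetry x_ij <-> x_(1-i)(1-j), which swaps h1 and
       h2 and fixes h3); |R| is closed under products.
   (4) Prepending the generators of a word one at a time and applying, at each step,
       the one relation that may have become applicable (norm_word) yields a word in
       normal form equal to the given one; norm_word is invariant under the relations,
       so this normal form is unique.
   (3) Every relation holds in F; conversely the reduced evaluation of a normal form
       determines it (the first generator is read off the first letters, and the rest
       of the reduced word is recovered from what follows), so F-equal normal forms
       coincide.
   (2) A reduced word of |R| starts with x00 x11, x11 x00, some p_i or some q_i; the
       hard case, that a reduced word of |R| starting with x00 x01 begins with a p_i, is
       a three-step analysis of the alternating blocks comparing the three images.
       Peeling off that prefix leaves a shorter element of |R|, giving an induction. *)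

abbreviation rd :: "'a list \<Rightarrow> 'a list" where "rd \<equiv> remdups_adj"


section \<open>The free semigroup on idempotents\<close>

lemma pres_eq_append_cong: "pres_eq R x y \<Longrightarrow> pres_eq R (u @ x @ v) (u @ y @ v)"
proof (induction rule: pres_eq.induct)
  case (pres_step l r u' v')
  from pres_eq.pres_step[OF pres_step, of "u @ u'" "v' @ v"] show ?case by simp
qed (auto intro: pres_eq.intros)

lemma idem_eq_map: "pres_eq idem_rels x y \<Longrightarrow> pres_eq idem_rels (map h x) (map h y)"
proof (induction rule: pres_eq.induct)
  case (pres_step l r u v)
  then obtain a where "l = [a, a]" "r = [a]" by (auto simp: idem_rels_def)
  moreover have "([h a, h a], [h a]) \<in> idem_rels" by (auto simp: idem_rels_def)
  ultimately show ?case using pres_eq.pres_step[of "[h a, h a]" "[h a]" idem_rels "map h u" "map h v"]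
    by simp
qed (auto intro: pres_eq.intros)

lemma idem_eq_rd: "pres_eq idem_rels x y \<Longrightarrow> rd x = rd y"
proof (induction rule: pres_eq.induct)
  case (pres_step l r u v)
  then obtain a where "l = [a, a]" "r = [a]" by (auto simp: idem_rels_def)
  then show ?case using remdups_adj_append[of u a "a # v"] remdups_adj_append[of u a v] by simp
qed auto

lemma idem_eq_rd_self: "pres_eq idem_rels x (rd x)"
proof (induction x rule: remdups_adj.induct)
  case (3 x y xs)
  show ?case
  proof (cases "x = y")
    case True
    have "pres_eq idem_rels ([] @ [x, x] @ xs) ([] @ [x] @ xs)"
      by (rule pres_step) (auto simp: idem_rels_def)
    then show ?thesis using 3 True by (auto intro: pres_trans)
  next
    case False
    then show ?thesis
      using 3 pres_eq_append_cong[of idem_rels "y # xs" "rd (y # xs)" "[x]" "[]"] by simp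
  qed
qed (auto intro: pres_refl)

lemma idem_eq_iff: "pres_eq idem_rels x y \<longleftrightarrow> rd x = rd y"
  by (metis idem_eq_rd idem_eq_rd_self pres_sym pres_trans)

lemma rd_append_cong: "rd x = rd x' \<Longrightarrow> rd y = rd y' \<Longrightarrow> rd (x @ y) = rd (x' @ y')"
  using pres_eq_append_cong[of idem_rels x x' "[]" y] pres_eq_append_cong[of idem_rels y y' x' "[]"]
  by (simp add: idem_eq_iff[symmetric]) (metis pres_trans)

lemma rd_map_cong: "rd x = rd y \<Longrightarrow> rd (map h x) = rd (map h y)"
  by (metis idem_eq_iff idem_eq_map)

lemma R_set_iff:
  "w \<in> R_set \<longleftrightarrow> w \<noteq> [] \<and> rd (map h1 w) = rd (map h2 w) \<and> rd (map h2 w) = rd (map h3 w)"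
  by (simp add: R_set_def idem_eq_iff)

lemma dropWhile_replicate_append [simp]:
  "dropWhile (\<lambda>y. y = z) (replicate n z @ ys) = dropWhile (\<lambda>y. y = z) ys"
  by (induction n) auto

lemma rd_absorb_mid: "xs \<noteq> [] \<Longrightarrow> z = last xs \<Longrightarrow> rd (xs @ replicate n z @ ys) = rd (xs @ ys)"
  by (simp add: remdups_adj_append'')

lemma rd_absorb_last: "xs \<noteq> [] \<Longrightarrow> rd (xs @ last xs # ys) = rd (xs @ ys)"
  using rd_absorb_mid[of xs "last xs" 1 ys] by simp

lemma rd_absorb_first: "xs \<noteq> [] \<Longrightarrow> rd (hd xs # xs) = rd xs"
  by (cases xs) auto

lemma rd_replicate_front: "0 < n \<Longrightarrow> rd (replicate n z @ ys) = rd (z # ys)"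
proof (induction n)
  case (Suc n) then show ?case by (cases n) auto
qed simp

lemma rd_id: "distinct_adj xs \<Longrightarrow> rd xs = xs"
  by (simp add: distinct_adj_altdef)

lemma rd_map_prefix: "w = x @ y \<Longrightarrow> \<exists>zs. rd (map h w) = rd (map h x) @ zs"
  by (cases "x = []") (auto simp: remdups_adj_append'')


section \<open>Alternating words\<close>

text \<open>alt x y n = x y x y ... of length n; all the words p_i, q_i and their images are
  concatenations of such blocks.\<close>
fun alt :: "'a \<Rightarrow> 'a \<Rightarrow> nat \<Rightarrow> 'a list" where
  "alt x y 0 = []" | "alt x y (Suc n) = x # alt y x n"

lemma length_alt [simp]: "length (alt x y n) = n"
  by (induction n arbitrary: x y) auto

lemma nth_alt: "i < n \<Longrightarrow> alt x y n ! i = (if even i then x else y)"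
  by (induction n arbitrary: x y i) (auto simp: nth_Cons split: nat.splits)

lemma map_alt [simp]: "map h (alt x y n) = alt (h x) (h y) n"
  by (induction n arbitrary: x y) auto

lemma alt_same [simp]: "alt x x n = replicate n x"
  by (induction n) auto

lemma alt_Nil_iff [simp]: "alt x y n = [] \<longleftrightarrow> n = 0"
  by (cases n) auto

lemma hd_alt [simp]: "0 < n \<Longrightarrow> hd (alt x y n) = x"
  by (cases n) auto

lemma last_alt: "0 < n \<Longrightarrow> last (alt x y n) = (if odd n then x else y)"
proof (induction n arbitrary: x y)
  case (Suc n) then show ?case by (cases n) auto
qed simp

lemma alt_add: "alt x y (m + n) = alt x y m @ (if even m then alt x y n else alt y x n)"
  by (induction m arbitrary: x y) auto

lemma distinct_adj_alt: "x \<noteq> y \<Longrightarrow> distinct_adj (alt x y n)"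
  by (induction n arbitrary: x y) (auto simp: distinct_adj_Cons)

lemma rd_alt [simp]: "x \<noteq> y \<Longrightarrow> rd (alt x y n) = alt x y n"
  by (simp add: distinct_adj_alt rd_id)

lemma concat_replicate_pair: "concat (replicate k [x, y]) = alt x y (2 * k)"
  by (induction k) auto

lemma alt_snoc_even: "even m \<Longrightarrow> alt x y m @ [x] = alt x y (Suc m)"
  using alt_add[of x y m 1] by simp

declare alt.simps(2) [simp del]

lemma alt_two_letters:
  "distinct_adj u \<Longrightarrow> set u \<subseteq> {x, y} \<Longrightarrow> u \<noteq> [] \<Longrightarrow> hd u = x \<Longrightarrow> x \<noteq> y
    \<Longrightarrow> u = alt x y (length u)"
proof (induction u arbitrary: x y)
  case (Cons a u)
  show ?case
  proof (cases u)
    case Nil then show ?thesis using Cons by (simp add: alt.simps(2))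
  next
    case (Cons b u')
    with Cons.prems have "b = y" by (auto simp: distinct_adj_Cons)
    with Cons.prems Cons Cons.IH[of y x] have "u = alt y x (length u)"
      by (auto simp: distinct_adj_Cons)
    then show ?thesis using Cons.prems by (simp add: alt.simps(2))
  qed
qed simp

lemma split_alt:
  assumes "distinct_adj w" "w \<noteq> []" "hd w = x" "x \<noteq> y"
  obtains k v where "w = alt x y k @ v" "0 < k" "v = [] \<or> (hd v \<noteq> x \<and> hd v \<noteq> y)"
proof -
  define u where "u = takeWhile (\<lambda>l. l \<in> {x, y}) w"
  define v where "v = dropWhile (\<lambda>l. l \<in> {x, y}) w"
  have wuv: "w = u @ v" by (simp add: u_def v_def)
  obtain a w' where "w = a # w'" using assms(2) by (cases w) auto
  then have ne: "u \<noteq> []" and hd: "hd u = x" using assms(3) by (simp_all add: u_def)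
  have "set u \<subseteq> {x, y}" unfolding u_def by (auto dest: set_takeWhileD)
  moreover have "distinct_adj u" using assms(1) wuv by auto
  ultimately have "u = alt x y (length u)" using alt_two_letters[OF _ _ ne hd assms(4)] by simp
  moreover have "v = [] \<or> (hd v \<noteq> x \<and> hd v \<noteq> y)"
    unfolding v_def using hd_dropWhile[of "\<lambda>l. l \<in> {x, y}" w] by auto
  ultimately show ?thesis using that[of "length u" v] wuv ne by simp
qed


section \<open>The words p_i and q_i\<close>

lemma pw_alt: "pw i = alt X00 X01 (2*i+2) @ alt X10 X01 (2*i+1) @ alt X11 X10 (2*i+1)"
proof -
  have 1: "concat (replicate (i+1) [X10, X11]) = X10 # alt X11 X10 (2*i+1)"
    by (simp add: concat_replicate_pair alt.simps(2))
  have 2: "alt X10 X01 (2*i) @ [X10] = alt X10 X01 (2*i+1)"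
    by (simp add: alt_snoc_even)
  have "pw i = alt X00 X01 (2*(i+1)) @ alt X10 X01 (2*i) @ X10 # alt X11 X10 (2*i+1)"
    unfolding pw_def 1 by (simp only: concat_replicate_pair)
  also have "\<dots> = alt X00 X01 (2*i+2) @ (alt X10 X01 (2*i) @ [X10]) @ alt X11 X10 (2*i+1)"
    by simp
  finally show ?thesis unfolding 2 .
qed

lemma qw_alt: "qw i = alt X11 X10 (2*i+2) @ alt X01 X10 (2*i+1) @ alt X00 X01 (2*i+1)"
proof -
  have 1: "concat (replicate (i+1) [X01, X00]) = X01 # alt X00 X01 (2*i+1)"
    by (simp add: concat_replicate_pair alt.simps(2))
  have 2: "alt X01 X10 (2*i) @ [X01] = alt X01 X10 (2*i+1)"
    by (simp add: alt_snoc_even)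
  have "qw i = alt X11 X10 (2*(i+1)) @ alt X01 X10 (2*i) @ X01 # alt X00 X01 (2*i+1)"
    unfolding qw_def 1 by (simp only: concat_replicate_pair)
  also have "\<dots> = alt X11 X10 (2*i+2) @ (alt X01 X10 (2*i) @ [X01]) @ alt X00 X01 (2*i+1)"
    by simp
  finally show ?thesis unfolding 2 .
qed

lemma pw_Cons: "pw i = X00 # X01 # alt X00 X01 (2*i) @ alt X10 X01 (2*i+1) @ alt X11 X10 (2*i+1)"
  unfolding pw_alt by (simp add: alt.simps(2))

lemma pw_ne [simp]: "pw i \<noteq> []" and hd_pw [simp]: "hd (pw i) = X00"
  by (simp_all add: pw_Cons)

lemma length_pw: "length (pw i) = 6*i+4"
  unfolding pw_alt by simp

lemma last_pw [simp]: "last (pw i) = X11"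
  unfolding pw_alt by (simp add: last_alt)

lemma pw_nth_lt: "k < 2*i+2 \<Longrightarrow> pw i ! k = (if even k then X00 else X01)"
  unfolding pw_alt by (simp add: nth_append nth_alt)

lemma pw_nth_block_end: "pw i ! (2*i+2) = X10"
  unfolding pw_alt by (simp add: nth_append nth_alt)

text \<open>p_i and p_j (i < j) are incomparable in the prefix order: at position 2i+2 the
  first has x10, the second x00.\<close>
lemma pw_prefix_inj: "pw i @ x = pw j @ y \<Longrightarrow> i = j"
proof (rule ccontr)
  assume eq: "pw i @ x = pw j @ y" and "i \<noteq> j"
  have "(pw k @ z) ! (2*k+2) = X10" for k z
    using pw_nth_block_end[of k] by (simp add: nth_append length_pw)
  moreover have "(pw l @ z) ! (2*k+2) = X00" if "k < l" for k l z
    using pw_nth_lt[of "2*k+2" l] that by (simp add: nth_append length_pw)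
  ultimately show False using eq \<open>i \<noteq> j\<close> by (metis X4.distinct(3) linorder_neqE_nat)
qed

definition p_image :: "nat \<Rightarrow> X3 list" where
  "p_image i = alt XL XM (2*i+2) @ alt XR XM (2*i+1)"

lemma rd_p_image: "rd (alt XL XM (2*i+2) @ alt XR XM (2*i+1)) = p_image i"
  unfolding p_image_def by (subst remdups_adj_append') (auto simp: last_alt)

lemma rd_h1_pw: "rd (map h1 (pw i)) = p_image i"
proof -
  have "rd (map h1 (pw i)) = rd ((alt XL XM (2*i+2) @ alt XR XM (2*i+1)) @ replicate (2*i+1) XR)"
    unfolding pw_alt by simp
  also have "\<dots> = rd (alt XL XM (2*i+2) @ alt XR XM (2*i+1))"
    using rd_absorb_mid[of "alt XL XM (2*i+2) @ alt XR XM (2*i+1)" XR "2*i+1" "[]"]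
    by (simp add: last_alt)
  also have "\<dots> = p_image i" by (rule rd_p_image)
  finally show ?thesis .
qed

lemma rd_h2_pw: "rd (map h2 (pw i)) = p_image i"
proof -
  have "rd (map h2 (pw i)) = rd (replicate (2*i+2) XL @ alt XM XL (2*i+1) @ alt XR XM (2*i+1))"
    unfolding pw_alt by simp
  also have "\<dots> = rd (alt XL XM (2*i+2) @ alt XR XM (2*i+1))"
    by (subst rd_replicate_front) (simp_all add: alt.simps(2))
  also have "\<dots> = p_image i" by (rule rd_p_image)
  finally show ?thesis .
qed

lemma rd_h3_pw: "rd (map h3 (pw i)) = p_image i"
proof -
  have "rd (map h3 (pw i)) = rd (alt XL XM (2*i+2) @ replicate (2*i+1) XM @ alt XR XM (2*i+1))"
    unfolding pw_alt by simp
  also have "\<dots> = rd (alt XL XM (2*i+2) @ alt XR XM (2*i+1))"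
    by (rule rd_absorb_mid) (auto simp: last_alt)
  also have "\<dots> = p_image i" by (rule rd_p_image)
  finally show ?thesis .
qed

lemma pw_in_R: "pw i \<in> R_set"
  unfolding R_set_iff rd_h1_pw rd_h2_pw rd_h3_pw by (simp add: pw_alt)

text \<open>The symmetry x_ij \<mapsto> x_(1-i)(1-j) of F and x_lambda \<leftrightarrow> x_rho of G: it
  interchanges h1 and h2, commutes with h3, maps |R| to itself and p_i to q_i.\<close>
fun sg :: "X4 \<Rightarrow> X4" where
  "sg X00 = X11" | "sg X01 = X10" | "sg X10 = X01" | "sg X11 = X00"

fun tg :: "X3 \<Rightarrow> X3" where
  "tg XL = XR" | "tg XM = XM" | "tg XR = XL"

lemma sg_sg [simp]: "sg (sg x) = x"
  by (cases x) auto

lemma map_sg_sg [simp]: "map sg (map sg w) = w"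
  by (induction w) auto

lemma tg_tg [simp]: "tg (tg x) = x"
  by (cases x) auto

lemma inj_sg: "inj sg"
  by (metis injI sg_sg)

lemma inj_tg: "inj tg"
  by (metis injI tg_tg)

lemma h_sg: "h1 (sg x) = tg (h2 x)" "h2 (sg x) = tg (h1 x)" "h3 (sg x) = tg (h3 x)"
  by (cases x; simp)+

lemma map_h_sg:
  "map h1 (map sg w) = map tg (map h2 w)" "map h2 (map sg w) = map tg (map h1 w)"
  "map h3 (map sg w) = map tg (map h3 w)"
  by (induction w) (simp_all add: h_sg)

lemma R_sg: "w \<in> R_set \<Longrightarrow> map sg w \<in> R_set"
  unfolding R_set_iff map_h_sg remdups_adj_map_injective[OF inj_tg] by simp

lemma sg_pw: "map sg (pw i) = qw i"
  unfolding pw_alt qw_alt by simp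

lemma qw_in_R: "qw i \<in> R_set"
  using R_sg[OF pw_in_R] sg_pw by simp

lemma qw_Cons: "qw i = X11 # X10 # alt X11 X10 (2*i) @ alt X01 X10 (2*i+1) @ alt X00 X01 (2*i+1)"
  unfolding qw_alt by (simp add: alt.simps(2))

lemma qw_ne [simp]: "qw i \<noteq> []" and hd_qw [simp]: "hd (qw i) = X11"
  by (simp_all add: qw_Cons)

lemma last_qw [simp]: "last (qw i) = X00"
  unfolding qw_alt by (simp add: last_alt)

lemma qw_prefix_inj: "qw i @ x = qw j @ y \<Longrightarrow> i = j"
  using pw_prefix_inj[of i "map sg x" j "map sg y"] arg_cong[of _ _ "map sg"]
  by (metis map_append map_sg_sg sg_pw)

lemma rd_pw: "rd (pw i) = pw i"
  unfolding pw_alt by (subst remdups_adj_append', simp add: last_alt)+ auto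

lemma rd_qw: "rd (qw i) = qw i"
  using rd_pw[of i] remdups_adj_map_injective[OF inj_sg, of "pw i"] by (simp add: sg_pw)


lemma gen_ne [simp]: "gen g \<noteq> []"
  by (cases g) auto

lemma gen_in_R: "gen g \<in> R_set"
  by (cases g) (simp_all add: pw_in_R qw_in_R, simp_all add: R_set_iff)

lemma R_append: "x \<in> R_set \<Longrightarrow> y \<in> R_set \<Longrightarrow> x @ y \<in> R_set"
  unfolding R_set_iff by (auto intro: rd_append_cong)

lemma evalY_Cons: "evalY (g # u) = gen g @ evalY u"
  by (simp add: evalY_def)

lemma evalY_append: "evalY (u @ v) = evalY u @ evalY v"
  by (simp add: evalY_def)

lemma evalY_Nil [simp]: "evalY [] = []"
  by (simp add: evalY_def)

lemma evalY_in_R: "u \<noteq> [] \<Longrightarrow> evalY u \<in> R_set"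
proof (induction u)
  case (Cons g u)
  then show ?case by (cases "u = []") (auto simp: evalY_Cons gen_in_R R_append)
qed simp


section \<open>Claim 4: the normal form\<close>

fun forbidden :: "Y \<Rightarrow> Y \<Rightarrow> bool" where
  "forbidden A A = True" | "forbidden A (P i) = True" | "forbidden B B = True"
| "forbidden B (Q i) = True" | "forbidden (P i) B = True" | "forbidden (Q i) A = True"
| "forbidden _ _ = False"

fun no_forbidden :: "Y list \<Rightarrow> bool" where
  "no_forbidden (x # y # zs) \<longleftrightarrow> \<not> forbidden x y \<and> no_forbidden (y # zs)"
| "no_forbidden _ = True"

lemma factor2_Cons:
  "(\<exists>u v. x # ys = u @ [a, b] @ v) \<longleftrightarrow> (\<exists>v. ys = b # v \<and> x = a) \<or> (\<exists>u v. ys = u @ [a, b] @ v)"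
  by (auto simp: Cons_eq_append_conv)

lemma forbidden_factor_iff:
  "(\<exists>u v x y. w = u @ [x, y] @ v \<and> forbidden x y) \<longleftrightarrow> \<not> no_forbidden w"
proof (induction w rule: no_forbidden.induct)
  case (1 x y zs)
  have "(\<exists>u v a b. x # y # zs = u @ [a, b] @ v \<and> forbidden a b)
      \<longleftrightarrow> (\<exists>a b. (\<exists>u v. x # y # zs = u @ [a, b] @ v) \<and> forbidden a b)"
    by blast
  also have "\<dots> \<longleftrightarrow> forbidden x y \<or> (\<exists>a b. (\<exists>u v. y # zs = u @ [a, b] @ v) \<and> forbidden a b)"
    unfolding factor2_Cons list.inject by blast
  also have "\<dots> \<longleftrightarrow> forbidden x y \<or> \<not> no_forbidden (y # zs)"
    using 1 by blast
  finally show ?case by simp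
next
  case ("2_2" v) then show ?case by (auto simp: Cons_eq_append_conv)
qed simp

lemma forbidden_iff:
  "forbidden x y \<longleftrightarrow> (\<exists>i. (x = A \<and> y = A) \<or> (x = B \<and> y = B) \<or> (x = A \<and> y = P i)
      \<or> (x = P i \<and> y = B) \<or> (x = B \<and> y = Q i) \<or> (x = Q i \<and> y = A))"
  by (cases x; cases y) auto

lemma nf_iff: "nf w \<longleftrightarrow> w \<noteq> [] \<and> no_forbidden w"
proof -
  have "(\<exists>u v i. w = u @ [A, A] @ v \<or> w = u @ [B, B] @ v \<or> w = u @ [A, P i] @ v
        \<or> w = u @ [P i, B] @ v \<or> w = u @ [B, Q i] @ v \<or> w = u @ [Q i, A] @ v)
      \<longleftrightarrow> (\<exists>u v x y. w = u @ [x, y] @ v \<and> forbidden x y)"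
    unfolding forbidden_iff by blast
  then show ?thesis unfolding nf_def forbidden_factor_iff by blast
qed

lemma no_forbidden_tl: "no_forbidden (g # s) \<Longrightarrow> no_forbidden s"
  by (cases s) auto

text \<open>Prepending a generator to a normal form and applying the one relation that may
  become applicable (x00 x00 = x00, x00 p_i = p_i, ...).\<close>
fun push :: "Y \<Rightarrow> Y list \<Rightarrow> Y list" where
  "push y [] = [y]"
| "push y (z # zs) =
    (if forbidden y z then (case y of P _ \<Rightarrow> y # zs | Q _ \<Rightarrow> y # zs | _ \<Rightarrow> z # zs)
     else y # z # zs)"

definition norm_word :: "Y list \<Rightarrow> Y list" where
  "norm_word u = foldr push u []"

lemma norm_word_Nil [simp]: "norm_word [] = []"
  by (simp add: norm_word_def)

lemma norm_word_Cons: "norm_word (y # u) = push y (norm_word u)"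
  by (simp add: norm_word_def)

lemma push_pres_eq: "pres_eq R_rels (y # s) (push y s)"
proof (cases s)
  case (Cons z zs)
  have rel: "pres_eq R_rels (x # y' # zs) (w # zs)" if "([x, y'], [w]) \<in> R_rels" for x y' w
    using pres_step[OF that, of "[]" zs] by simp
  show ?thesis
  proof (cases "forbidden y z")
    case True
    then show ?thesis using Cons
      by (cases y; cases z) (auto intro!: rel simp del: R_rels_def, auto simp: R_rels_def)
  qed (simp add: Cons pres_refl)
qed (simp add: pres_refl)

lemma norm_word_pres_eq: "pres_eq R_rels u (norm_word u)"
proof (induction u)
  case (Cons y u)
  have "pres_eq R_rels ([y] @ u @ []) ([y] @ norm_word u @ [])"
    by (rule pres_eq_append_cong[OF Cons])
  then show ?case using push_pres_eq[of y "norm_word u"]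
    by (auto simp: norm_word_Cons intro: pres_trans)
qed (simp add: pres_refl)

lemma push_no_forbidden: "no_forbidden s \<Longrightarrow> no_forbidden (push y s)"
proof (cases s)
  case (Cons z zs)
  assume nf: "no_forbidden s"
  show ?thesis
  proof (cases "forbidden y z")
    case True
    then show ?thesis using nf Cons by (cases zs; cases y; cases z; cases "hd zs") auto
  qed (use nf Cons in simp)
qed simp

lemma norm_word_no_forbidden: "no_forbidden (norm_word u)"
  by (induction u) (auto simp: norm_word_Cons push_no_forbidden)

lemma norm_word_nf: "u \<noteq> [] \<Longrightarrow> nf (norm_word u)"
proof -
  have "push y s \<noteq> []" for y s
    by (cases s) (auto split: Y.splits)
  then show "u \<noteq> [] \<Longrightarrow> nf (norm_word u)"
    by (cases u) (auto simp: nf_iff norm_word_Cons push_no_forbidden norm_word_no_forbidden)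
qed

lemma norm_word_nf_id: "no_forbidden v \<Longrightarrow> norm_word v = v"
proof (induction v)
  case (Cons y v)
  then have "norm_word v = v" by (simp add: no_forbidden_tl)
  then show ?case using Cons.prems by (cases v) (auto simp: norm_word_Cons)
qed simp

text \<open>Pushing the two sides of a relation onto a normal form gives the same result, so
  norm_word is an invariant of the presented semigroup.\<close>
lemma push_rel: "(l, r) \<in> R_rels \<Longrightarrow> foldr push l s = foldr push r s"
  unfolding R_rels_def by (cases s; auto; case_tac "hd s"; auto split: Y.splits)

lemma pres_eq_norm_word: "pres_eq R_rels u v \<Longrightarrow> norm_word u = norm_word v"
proof (induction rule: pres_eq.induct)
  case (pres_step l r u v)
  then show ?case by (simp add: norm_word_def push_rel)
qed auto

lemma unique_nf: "u \<noteq> [] \<Longrightarrow> \<exists>!v. nf v \<and> pres_eq R_rels u v"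
proof
  assume "u \<noteq> []"
  then show "nf (norm_word u) \<and> pres_eq R_rels u (norm_word u)"
    by (simp add: norm_word_nf norm_word_pres_eq)
next
  fix v assume "nf v \<and> pres_eq R_rels u v"
  then have "norm_word u = norm_word v" "no_forbidden v" by (auto simp: pres_eq_norm_word nf_iff)
  then show "v = norm_word u" by (simp add: norm_word_nf_id)
qed


lemma rd_gen: "rd (gen g) = gen g"
  by (cases g) (auto simp: rd_pw rd_qw)

lemma R_rels_hold_in_F: "(l, r) \<in> R_rels \<Longrightarrow> rd (evalY l) = rd (evalY r)"
proof -
  assume "(l, r) \<in> R_rels"
  then consider "l = [A, A]" "r = [A]" | "l = [B, B]" "r = [B]"
    | i where "l = [A, P i]" "r = [P i]" | i where "l = [P i, B]" "r = [P i]"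
    | i where "l = [B, Q i]" "r = [Q i]" | i where "l = [Q i, A]" "r = [Q i]"
    unfolding R_rels_def by blast
  then show ?thesis
  proof cases
    case (3 i) then show ?thesis using rd_absorb_first[of "pw i"] by (simp add: evalY_def)
  next
    case (4 i) then show ?thesis using rd_absorb_last[of "pw i" "[]"] by (simp add: evalY_def)
  next
    case (5 i) then show ?thesis using rd_absorb_first[of "qw i"] by (simp add: evalY_def)
  next
    case (6 i) then show ?thesis using rd_absorb_last[of "qw i" "[]"] by (simp add: evalY_def)
  qed (auto simp: evalY_def)
qed

lemma pres_eq_evalY: "pres_eq R_rels u v \<Longrightarrow> F_eq (evalY u) (evalY v)"
proof (induction rule: pres_eq.induct)
  case (pres_step l r u v)
  then have "rd (evalY u @ evalY l @ evalY v) = rd (evalY u @ evalY r @ evalY v)"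
    using R_rels_hold_in_F[OF pres_step] by (intro rd_append_cong) auto
  then show ?case by (simp add: idem_eq_iff evalY_append)
qed (auto intro: pres_eq.intros)


section \<open>Claim 3, completeness: the reduced evaluation of a normal form determines it\<close>

abbreviation reval :: "Y list \<Rightarrow> X4 list" where
  "reval s \<equiv> rd (evalY s)"

text \<open>What follows gen g in reval (g # s): reval s, with its first letter dropped when
  it coincides with the last letter of gen g.\<close>
definition glued_tail :: "Y \<Rightarrow> Y list \<Rightarrow> X4 list" where
  "glued_tail g s = tl (rd (last (gen g) # evalY s))"

lemma glued_tail_Nil [simp]: "glued_tail g [] = []"
  by (simp add: glued_tail_def)

lemma reval_Cons: "reval (g # s) = gen g @ glued_tail g s"
proof -
  have "gen g = butlast (gen g) @ [last (gen g)]" by simp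
  then have "reval (g # s) = rd (butlast (gen g) @ last (gen g) # evalY s)"
    by (metis append_Cons append_assoc append_Nil evalY_Cons)
  also have "\<dots> = rd (gen g) @ glued_tail g s"
    unfolding glued_tail_def by (subst remdups_adj_append) simp
  finally show ?thesis by (simp add: rd_gen)
qed

lemma evalY_ne: "s \<noteq> [] \<Longrightarrow> evalY s \<noteq> []"
  by (cases s) (auto simp: evalY_Cons)

lemma hd_reval: "s \<noteq> [] \<Longrightarrow> hd (reval s) = hd (gen (hd s))"
  by (cases s) (auto simp: evalY_Cons)

lemma reval_hd_tl:
  assumes "s \<noteq> []" obtains xs where "reval s = hd (gen (hd s)) # xs"
  using hd_reval[OF assms] evalY_ne[OF assms] that by (metis list.collapse remdups_adj_Nil_iff)

lemma glued_tail_cases: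
  assumes "s \<noteq> []"
  shows "glued_tail g s = (if hd (gen (hd s)) = last (gen g) then tl (reval s) else reval s)"
proof -
  obtain xs where "reval s = hd (gen (hd s)) # xs" using reval_hd_tl[OF assms] .
  then show ?thesis unfolding glued_tail_def by (simp add: remdups_adj_Cons)
qed

lemma hd_gen: "hd (gen g) = (case g of A \<Rightarrow> X00 | P _ \<Rightarrow> X00 | _ \<Rightarrow> X11)"
  by (cases g) auto

lemma last_gen: "last (gen g) = (case g of A \<Rightarrow> X00 | Q _ \<Rightarrow> X00 | _ \<Rightarrow> X11)"
  by (cases g) auto

text \<open>In a normal form, the first letter of a generator is swallowed by its predecessor
  only for x00 p_i and x11 q_i; then the letter that follows is x01 or x10.  So the
  first letter of the glued tail tells whether a letter was swallowed, and reval s can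
  be read off from glued_tail g s.\<close>
lemma reval_from_glued_tail:
  assumes nf: "no_forbidden (g # s)" and ne: "s \<noteq> []"
  shows "glued_tail g s \<noteq> []"
    and "reval s = (if hd (glued_tail g s) \<in> {X01, X10} then last (gen g) # glued_tail g s
                    else glued_tail g s)"
proof -
  obtain h r where s: "s = h # r" using ne by (cases s) auto
  define x where "x = hd (gen h)"
  obtain xs where ev: "reval s = x # xs" using reval_hd_tl[OF ne] s x_def by auto
  have "glued_tail g s \<noteq> [] \<and> reval s = (if hd (glued_tail g s) \<in> {X01, X10}
      then last (gen g) # glued_tail g s else glued_tail g s)"
  proof (cases "x = last (gen g)")
    case True
    then obtain i where "h = P i \<or> h = Q i"
      using nf s x_def by (cases g; cases h) (auto simp: hd_gen last_gen)
    then obtain y t where "gen h = x # y # t" "y \<in> {X01, X10}"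
      using x_def pw_Cons[of i] qw_Cons[of i] by auto
    moreover have "x \<noteq> y" using x_def \<open>h = P i \<or> h = Q i\<close> \<open>y \<in> {X01, X10}\<close> by auto
    ultimately have "xs = rd (y # t @ evalY r)"
      using ev s by (simp add: evalY_Cons)
    then have "xs \<noteq> [] \<and> hd xs = y" by simp
    moreover have "glued_tail g s = xs"
      using glued_tail_cases[OF ne] ev s x_def True by simp
    ultimately show ?thesis using ev True \<open>y \<in> {X01, X10}\<close> by simp
  next
    case False
    then have "glued_tail g s = reval s"
      using glued_tail_cases[OF ne] s x_def by simp
    moreover have "x \<in> {X00, X11}" using x_def by (cases h) (auto simp: hd_gen)
    ultimately show ?thesis using ev by auto
  qed
  then show "glued_tail g s \<noteq> []" "reval s = (if hd (glued_tail g s) \<in> {X01, X10}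
      then last (gen g) # glued_tail g s else glued_tail g s)" by simp_all
qed

text \<open>The first two letters of reval (g # s) for a normal form: p_i and q_i are told
  apart from x00 and x11 by their second letter.\<close>
lemma take2_reval:
  assumes "no_forbidden (g # s)"
  shows "take 2 (reval (g # s)) = (case g of
      A \<Rightarrow> if s = [] then [X00] else [X00, X11]
    | B \<Rightarrow> if s = [] then [X11] else [X11, X00]
    | P _ \<Rightarrow> [X00, X01] | Q _ \<Rightarrow> [X11, X10])"
proof (cases g)
  case (P i) then show ?thesis by (simp add: reval_Cons pw_Cons numeral_2_eq_2)
next
  case (Q i) then show ?thesis by (simp add: reval_Cons qw_Cons numeral_2_eq_2)
next
  case A
  show ?thesis
  proof (cases s)
    case (Cons h r)
    then have ne: "s \<noteq> []" and "hd (gen (hd s)) = X11"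
      using assms A by (cases h; auto simp: hd_gen)+
    moreover obtain xs where "reval s = hd (gen (hd s)) # xs" using reval_hd_tl[OF ne] .
    ultimately have "reval (A # s) = X00 # X11 # xs"
      using reval_Cons[of A s] glued_tail_cases[OF ne, of A] by simp
    then show ?thesis using A ne by (simp add: numeral_2_eq_2)
  qed (simp add: A reval_Cons)
next
  case B
  show ?thesis
  proof (cases s)
    case (Cons h r)
    then have ne: "s \<noteq> []" and "hd (gen (hd s)) = X00"
      using assms B by (cases h; auto simp: hd_gen)+
    moreover obtain xs where "reval s = hd (gen (hd s)) # xs" using reval_hd_tl[OF ne] .
    ultimately have "reval (B # s) = X11 # X00 # xs"
      using reval_Cons[of B s] glued_tail_cases[OF ne, of B] by simp
    then show ?thesis using B ne by (simp add: numeral_2_eq_2)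
  qed (simp add: B reval_Cons)
qed

lemma reval_first_generator:
  assumes nfs: "no_forbidden (g # s)" "no_forbidden (g' # t)"
    and eq: "reval (g # s) = reval (g' # t)"
  shows "g = g'"
proof (cases "\<exists>i j. g = P i \<and> g' = P j \<or> g = Q i \<and> g' = Q j")
  case True
  then obtain i j where "g = P i \<and> g' = P j \<or> g = Q i \<and> g' = Q j" by blast
  then show ?thesis
  proof
    assume g: "g = P i \<and> g' = P j"
    then have "pw i @ glued_tail g s = pw j @ glued_tail g' t" using eq by (simp add: reval_Cons)
    then show ?thesis using g by (metis pw_prefix_inj)
  next
    assume g: "g = Q i \<and> g' = Q j"
    then have "qw i @ glued_tail g s = qw j @ glued_tail g' t" using eq by (simp add: reval_Cons)
    then show ?thesis using g by (metis qw_prefix_inj)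
  qed
next
  case False
  have "take 2 (reval (g # s)) = take 2 (reval (g' # t))" using eq by simp
  then have "(case g of A \<Rightarrow> if s = [] then [X00] else [X00, X11]
      | B \<Rightarrow> if s = [] then [X11] else [X11, X00] | P _ \<Rightarrow> [X00, X01] | Q _ \<Rightarrow> [X11, X10])
    = (case g' of A \<Rightarrow> if t = [] then [X00] else [X00, X11]
      | B \<Rightarrow> if t = [] then [X11] else [X11, X00] | P _ \<Rightarrow> [X00, X01] | Q _ \<Rightarrow> [X11, X10])"
    unfolding take2_reval[OF nfs(1)] take2_reval[OF nfs(2)] .
  then show ?thesis using False by (cases g; cases g') (auto split: if_splits)
qed

text \<open>Injectivity of reval on normal forms: the first generators agree, and then so do
  the glued tails, from which the rest is recovered.\<close>
lemma reval_inj: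
  "no_forbidden s \<Longrightarrow> no_forbidden t \<Longrightarrow> s \<noteq> [] \<Longrightarrow> t \<noteq> [] \<Longrightarrow> reval s = reval t \<Longrightarrow> s = t"
proof (induction s arbitrary: t)
  case (Cons g s)
  obtain g' t' where t: "t = g' # t'" using Cons.prems by (cases t) auto
  have "g = g'" using reval_first_generator[OF Cons.prems(1)] Cons.prems(2,5) t by simp
  then have tails: "glued_tail g s = glued_tail g t'" using Cons.prems(5) t by (simp add: reval_Cons)
  have nfs: "no_forbidden (g # s)" "no_forbidden (g # t')" using Cons.prems(1,2) t \<open>g = g'\<close> by auto
  have "s = [] \<longleftrightarrow> t' = []"
    using tails reval_from_glued_tail(1)[OF nfs(1)] reval_from_glued_tail(1)[OF nfs(2)]
    by (metis glued_tail_Nil)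
  moreover have "s = t'" if "s \<noteq> []" "t' \<noteq> []"
  proof -
    have "reval s = reval t'"
      using tails reval_from_glued_tail(2)[OF nfs(1) that(1)] reval_from_glued_tail(2)[OF nfs(2) that(2)]
      by simp
    then show ?thesis
      using Cons.IH[OF no_forbidden_tl[OF nfs(1)] no_forbidden_tl[OF nfs(2)] that] by simp
  qed
  ultimately show ?case using \<open>g = g'\<close> t by auto
qed simp

lemma F_eq_imp_pres_eq:
  assumes ne: "u \<noteq> []" "v \<noteq> []" and eq: "F_eq (evalY u) (evalY v)"
  shows "pres_eq R_rels u v"
proof -
  have "reval (norm_word u) = reval (norm_word v)"
    using eq pres_eq_evalY[OF norm_word_pres_eq[of u]] pres_eq_evalY[OF norm_word_pres_eq[of v]]
    by (auto simp: idem_eq_iff)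
  then have "norm_word u = norm_word v"
    using reval_inj norm_word_nf[OF ne(1)] norm_word_nf[OF ne(2)] by (auto simp: nf_iff)
  then show ?thesis by (metis norm_word_pres_eq pres_sym pres_trans)
qed


section \<open>Claim 2: |R| is generated by x00, x11, p_i, q_i\<close>

text \<open>Elements of |R| start with x00 or x11, the letters on which h1 and h2 agree.\<close>
lemma R_hd: "w \<in> R_set \<Longrightarrow> hd w = X00 \<or> hd w = X11"
proof -
  assume "w \<in> R_set"
  then have "w \<noteq> []" "rd (map h1 w) = rd (map h2 w)" by (auto simp: R_set_iff)
  then have "h1 (hd w) = h2 (hd w)" by (metis hd_map hd_remdups_adj)
  then show ?thesis by (cases "hd w") auto
qed

text \<open>No element of |R| starts with x00 x10 or x11 x01: h1 and h2 differ on these prefixes.\<close>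
lemma R_second_letter:
  assumes "w \<in> R_set" "w = x # y # t" "(x = X00 \<and> y = X10) \<or> (x = X11 \<and> y = X01)"
  shows False
proof -
  obtain z1 z2 where "rd (map h1 w) = rd (map h1 [x, y]) @ z1" "rd (map h2 w) = rd (map h2 [x, y]) @ z2"
    using rd_map_prefix[of w "[x, y]" t] assms(2) by fastforce
  with assms(1,3) show False by (auto simp: R_set_iff)
qed

text \<open>If g and g r lie in |R|, so does r with the last letter of g put back in front: the
  reduced images of g r are those of g followed by a common tail.\<close>
lemma R_peel: "g \<in> R_set \<Longrightarrow> g @ r \<in> R_set \<Longrightarrow> last g # r \<in> R_set"
proof -
  assume gR: "g \<in> R_set" and wR: "g @ r \<in> R_set"
  have gne: "g \<noteq> []" using gR by (simp add: R_set_iff)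
  define D where "D h = rd (dropWhile (\<lambda>y. y = h (last g)) (map h r))" for h :: "X4 \<Rightarrow> X3"
  have split: "rd (map h (g @ r)) = rd (map h g) @ D h" for h
    using remdups_adj_append''[of "map h g" "map h r"] gne by (simp add: D_def last_map)
  have cons: "rd (map h (last g # r)) = h (last g) # D h" for h
    by (simp add: D_def remdups_adj_Cons')
  have l: "h (last g) = last (rd (map h g))" for h using gne by (simp add: last_map)
  from gR wR have "rd (map h1 g) = rd (map h2 g)" "rd (map h2 g) = rd (map h3 g)"
    "rd (map h1 (g @ r)) = rd (map h2 (g @ r))" "rd (map h2 (g @ r)) = rd (map h3 (g @ r))"
    by (auto simp: R_set_iff)
  then have "D h1 = D h2" "D h2 = D h3" "h1 (last g) = h2 (last g)" "h2 (last g) = h3 (last g)"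
    using split[of h1] split[of h2] split[of h3] l[of h1] l[of h2] l[of h3] by auto
  then show ?thesis unfolding R_set_iff cons by simp
qed

lemma rd_h1_first_block:
  "2 \<le> k \<Longrightarrow> h1 x = XR \<Longrightarrow> rd (map h1 (alt X00 X01 k @ [x])) = alt XL XM k @ [XR]"
  by (subst rd_id) (simp_all add: distinct_adj_append_iff distinct_adj_alt last_alt)

lemma rd_h2_blocks:
  "0 < k \<Longrightarrow> rd (map h2 (alt X00 X01 k @ alt X10 X01 m @ zs)) = rd (alt XL XM (Suc m) @ map h2 zs)"
  using rd_replicate_front[of k XL "alt XM XL m @ map h2 zs"] by (simp add: alt.simps(2))

text \<open>The analysis of a reduced word w on which the three homomorphisms agree (in G) and
  which starts with x00 x01: comparing the reduced images of prefixes of w, which are all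
  prefixes of the common image of w, forces w to begin with some p_i.\<close>
context
  fixes w :: "X4 list"
  assumes reduced: "distinct_adj w"
    and agree12: "rd (map h1 w) = rd (map h2 w)" and agree23: "rd (map h2 w) = rd (map h3 w)"
begin

lemma image_of_prefix:
  assumes "w = x @ y" "h \<in> {h1, h2, h3}"
  shows "\<exists>zs. rd (map h1 w) = rd (map h x) @ zs"
proof -
  have "rd (map h w) = rd (map h1 w)" using assms(2) agree12 agree23 by auto
  then show ?thesis using rd_map_prefix[OF assms(1), of h] by simp
qed

lemma prefix_image_length:
  assumes "w = x @ y" "h \<in> {h1, h2, h3}"
  shows "length (rd (map h x)) \<le> length (rd (map h1 w))"
proof -
  obtain zs where "rd (map h1 w) = rd (map h x) @ zs" using image_of_prefix[OF assms] by blast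
  then show ?thesis by simp
qed

lemma images_agree:
  assumes "w = x @ y" "w = x' @ y'" "h \<in> {h1, h2, h3}" "h' \<in> {h1, h2, h3}"
    and "rd (map h x) = a" "rd (map h' x') = b" "i < length a" "i < length b"
  shows "a ! i = b ! i"
proof -
  obtain zs where z: "rd (map h1 w) = a @ zs" using image_of_prefix[OF assms(1,3)] assms(5) by blast
  obtain zs' where z': "rd (map h1 w) = b @ zs'" using image_of_prefix[OF assms(2,4)] assms(6) by blast
  have "a ! i = rd (map h1 w) ! i" using z assms(7) by (simp add: nth_append)
  also have "\<dots> = b ! i" using z' assms(8) by (simp add: nth_append)
  finally show ?thesis .
qed

lemma first_block:
  assumes w: "w = X00 # X01 # t"
  obtains k v where "w = alt X00 X01 k @ X10 # v" "2 \<le> k" "even k"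
proof -
  obtain k v where w0: "w = alt X00 X01 k @ v" "0 < k" "v = [] \<or> (hd v \<noteq> X00 \<and> hd v \<noteq> X01)"
    using split_alt[OF reduced, of X00 X01] w by auto
  have k2: "2 \<le> k"
  proof (rule ccontr)
    assume "\<not> 2 \<le> k" then have "k = 1" using w0 by simp
    then show False using w0 w by (cases v) (auto simp: alt.simps(2))
  qed
  have "v \<noteq> []"
  proof
    assume "v = []"
    then have "rd (map h1 w) = alt XL XM k" "rd (map h2 w) = [XL]"
      using w0 k2 by (simp_all add: remdups_adj_replicate)
    then have "alt XL XM k = [XL]" using agree12 by simp
    from arg_cong[OF this, of length] k2 show False by simp
  qed
  then obtain x v' where v: "v = x # v'" by (cases v) auto
  have "x \<noteq> X11"
  proof
    assume "x = X11"
    then have pre: "w = (alt X00 X01 k @ [X11]) @ v'" using w0 v by simp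
    have r1: "rd (map h1 (alt X00 X01 k @ [X11])) = alt XL XM k @ [XR]"
      using rd_h1_first_block[OF k2, of X11] by simp
    have r2: "rd (map h2 (alt X00 X01 k @ [X11])) = [XL, XR]"
      using k2 by (simp add: rd_replicate_front)
    show False using images_agree[OF pre pre _ _ r1 r2, of 1] k2 by (simp add: nth_append nth_alt)
  qed
  with w0 v have x: "x = X10" by (cases x) auto
  then have pre: "w = (alt X00 X01 k @ [X10]) @ v'" using w0 v by simp
  have "even k"
  proof (rule ccontr)
    assume odd: "\<not> even k"
    have r1: "rd (map h1 (alt X00 X01 k @ [X10])) = alt XL XM k @ [XR]"
      using rd_h1_first_block[OF k2, of X10] by simp
    have r3: "rd (map h3 (alt X00 X01 k @ [X10])) = alt XL XM k @ [XM]"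
      using k2 odd by (subst rd_id; simp add: distinct_adj_append_iff distinct_adj_alt last_alt)
    show False using images_agree[OF pre pre _ _ r1 r3, of k] by (simp add: nth_append)
  qed
  then show ?thesis using that w0 v x k2 by simp
qed

lemma second_block_end:
  assumes w: "w = alt X00 X01 k @ alt X10 X01 m @ v2" and k2: "2 \<le> k" and ek: "even k"
    and m: "0 < m" and v2: "v2 = [] \<or> (hd v2 \<noteq> X10 \<and> hd v2 \<noteq> X01)"
  obtains v3 where "v2 = X11 # v3"
proof -
  have pre1: "w = (alt X00 X01 k @ [X10]) @ alt X01 X10 (m - 1) @ v2"
    using w m by (cases m) (simp_all add: alt.simps(2))
  have r1: "rd (map h1 (alt X00 X01 k @ [X10])) = alt XL XM k @ [XR]"
    using rd_h1_first_block[OF k2, of X10] by simp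
  have lastM: "last (alt XL XM k) = XM" using ek k2 by (simp add: last_alt)
  have h3_absorb: "rd (alt XL XM k @ replicate m XM @ ys) = rd (alt XL XM k @ ys)" for ys
    using k2 lastM by (intro rd_absorb_mid) auto
  have "v2 \<noteq> []"
  proof
    assume "v2 = []"
    then have "rd (map h3 w) = alt XL XM k" using w h3_absorb[of "[]"] by simp
    moreover have "k + 1 \<le> length (rd (map h1 w))"
      using prefix_image_length[OF pre1, of h1] r1 by simp
    ultimately show False using agree12 agree23 by simp
  qed
  then obtain y v3 where v3: "v2 = y # v3" by (cases v2) auto
  have "y \<noteq> X00"
  proof
    assume "y = X00"
    then have pre3: "w = (alt X00 X01 k @ alt X10 X01 m @ [X00]) @ v3" using w v3 by simp
    have "rd (map h3 (alt X00 X01 k @ alt X10 X01 m @ [X00])) = rd (alt XL XM k @ [XL])"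
      using h3_absorb[of "[XL]"] by simp
    also have "\<dots> = alt XL XM k @ [XL]"
      using k2 lastM by (subst rd_id; simp add: distinct_adj_append_iff distinct_adj_alt)
    finally have r3: "rd (map h3 (alt X00 X01 k @ alt X10 X01 m @ [X00])) = alt XL XM k @ [XL]" .
    show False using images_agree[OF pre1 pre3 _ _ r1 r3, of k] by (simp add: nth_append)
  qed
  with v2 v3 have "y = X11" by (cases y) auto
  then show ?thesis using that v3 by simp
qed

text \<open>Second, the x10 x01 block is one shorter than the x00 x01 block: otherwise the
  images under h1 and h2 differ at the end of the shorter block.\<close>
lemma second_block_length:
  assumes w: "w = alt X00 X01 k @ alt X10 X01 m @ X11 # v3" and k2: "2 \<le> k" and ek: "even k"
    and m: "0 < m"
  shows "k = Suc m"
proof (rule ccontr)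
  assume "k \<noteq> Suc m"
  have pre1: "w = (alt X00 X01 k @ [X10]) @ alt X01 X10 (m - 1) @ X11 # v3"
    using w m by (cases m) (simp_all add: alt.simps(2))
  have r1: "rd (map h1 (alt X00 X01 k @ [X10])) = alt XL XM k @ [XR]"
    using rd_h1_first_block[OF k2, of X10] by simp
  have pre2: "w = (alt X00 X01 k @ alt X10 X01 m @ [X11]) @ v3" using w by simp
  have "rd (map h2 (alt X00 X01 k @ alt X10 X01 m @ [X11])) = rd (alt XL XM (Suc m) @ [XR])"
    using rd_h2_blocks[of k m "[X11]"] k2 by simp
  also have "\<dots> = alt XL XM (Suc m) @ [XR]"
    by (intro rd_id) (simp add: distinct_adj_append_iff distinct_adj_alt last_alt)
  finally have r2: "rd (map h2 (alt X00 X01 k @ alt X10 X01 m @ [X11])) = alt XL XM (Suc m) @ [XR]" .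
  consider "Suc m < k" | "k < Suc m" using \<open>k \<noteq> Suc m\<close> by linarith
  then show False
  proof cases
    case 1
    then show False using images_agree[OF pre1 pre2 _ _ r1 r2, of "Suc m"]
      by (simp add: nth_append nth_alt split: if_splits)
  next
    case 2
    then show False using images_agree[OF pre1 pre2 _ _ r1 r2, of k] ek
      by (simp add: nth_append nth_alt)
  qed
qed

lemma second_block:
  assumes w: "w = alt X00 X01 k @ X10 # v" and k2: "2 \<le> k" and ek: "even k"
  obtains v' where "w = alt X00 X01 k @ alt X10 X01 (k - 1) @ X11 # v'"
proof -
  have "distinct_adj (X10 # v)" using reduced w by auto
  then obtain m v2 where v: "X10 # v = alt X10 X01 m @ v2" "0 < m"
      "v2 = [] \<or> (hd v2 \<noteq> X10 \<and> hd v2 \<noteq> X01)"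
    using split_alt[of "X10 # v" X10 X01] by auto
  then obtain v3 where "w = alt X00 X01 k @ alt X10 X01 m @ X11 # v3"
    using second_block_end[of k m v2] w k2 ek by (metis append.assoc)
  moreover have "k = Suc m" using second_block_length[OF calculation k2 ek v(2)] .
  ultimately show ?thesis using that by simp
qed

text \<open>Step 3: the final alternating x11 x10 block is at least as long as the middle one:
  otherwise the images under h1 and h2 differ right after it.\<close>
lemma third_block_length:
  assumes w: "w = alt X00 X01 (Suc m) @ alt X10 X01 m @ alt X11 X10 r @ v4" and m: "odd m"
    and r: "0 < r" and v4: "v4 = [] \<or> (hd v4 \<noteq> X11 \<and> hd v4 \<noteq> X10)"
  shows "m \<le> r"
proof (rule ccontr)
  assume "\<not> m \<le> r"
  define k where "k = Suc m"
  have w': "w = alt X00 X01 k @ alt X10 X01 m @ alt X11 X10 r @ v4" using w by (simp add: k_def)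
  have lastM: "last (alt XL XM k) = XM" using m by (simp add: k_def last_alt)
  have "0 < m" using m by (rule odd_pos)
  have pre1: "w = (alt X00 X01 k @ alt X10 X01 m) @ alt X11 X10 r @ v4" using w' by simp
  have r1: "rd (map h1 (alt X00 X01 k @ alt X10 X01 m)) = alt XL XM k @ alt XR XM m"
    using lastM \<open>0 < m\<close> by (subst rd_id; simp add: distinct_adj_append_iff distinct_adj_alt k_def)
  have h2_image: "rd (map h2 (alt X00 X01 k @ alt X10 X01 m @ alt X11 X10 r @ ys))
      = rd (alt XL XM k @ alt XR XM r @ map h2 ys)" for ys
    using rd_h2_blocks[of k m "alt X11 X10 r @ ys"] by (simp add: k_def)
  show False
  proof (cases "v4 = []")
    case True
    then have "rd (map h2 w) = alt XL XM k @ alt XR XM r"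
      using w' h2_image[of "[]"] lastM r
      by (simp, subst rd_id; simp add: distinct_adj_append_iff distinct_adj_alt)
    moreover have "k + m \<le> length (rd (map h1 w))"
      using prefix_image_length[OF pre1, of h1] r1 by simp
    ultimately show False using agree12 \<open>\<not> m \<le> r\<close> by simp
  next
    case False
    then obtain z v5 where v5: "v4 = z # v5" by (cases v4) auto
    have "h2 z = XL" using v4 v5 by (cases z) auto
    have pre2: "w = (alt X00 X01 k @ alt X10 X01 m @ alt X11 X10 r @ [z]) @ v5"
      using w' v5 by simp
    have "rd (map h2 (alt X00 X01 k @ alt X10 X01 m @ alt X11 X10 r @ [z]))
        = rd (alt XL XM k @ alt XR XM r @ [XL])"
      using h2_image[of "[z]"] \<open>h2 z = XL\<close> by simp
    also have "\<dots> = alt XL XM k @ alt XR XM r @ [XL]"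
      using r lastM by (subst rd_id; auto simp: distinct_adj_append_iff distinct_adj_alt last_alt)
    finally have r2: "rd (map h2 (alt X00 X01 k @ alt X10 X01 m @ alt X11 X10 r @ [z]))
        = alt XL XM k @ alt XR XM r @ [XL]" .
    show False using images_agree[OF pre1 pre2 _ _ r1 r2, of "k + r"] \<open>\<not> m \<le> r\<close>
      by (simp add: nth_append nth_alt split: if_splits)
  qed
qed

lemma third_block:
  assumes w: "w = alt X00 X01 (2*i+2) @ alt X10 X01 (2*i+1) @ X11 # v"
  shows "\<exists>r. w = pw i @ r"
proof -
  have "distinct_adj (X11 # v)" using reduced w by auto
  then obtain r v4 where v: "X11 # v = alt X11 X10 r @ v4" "0 < r"
      "v4 = [] \<or> (hd v4 \<noteq> X11 \<and> hd v4 \<noteq> X10)"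
    using split_alt[of "X11 # v" X11 X10] by auto
  have w': "w = alt X00 X01 (Suc (2*i+1)) @ alt X10 X01 (2*i+1) @ alt X11 X10 r @ v4"
    using w v by simp
  have "2*i+1 \<le> r" using third_block_length[OF w' _ v(2,3)] by simp
  then have "alt X11 X10 r = alt X11 X10 (2*i+1) @ alt X10 X11 (r - (2*i+1))"
    using alt_add[of X11 X10 "2*i+1" "r - (2*i+1)"] by simp
  then have "w = pw i @ (alt X10 X11 (r - (2*i+1)) @ v4)"
    using w' by (simp add: pw_alt)
  then show ?thesis by blast
qed

lemma starts_with_pw: "w = X00 # X01 # t \<Longrightarrow> \<exists>i r. w = pw i @ r"
proof -
  assume "w = X00 # X01 # t"
  then obtain k v where w1: "w = alt X00 X01 k @ X10 # v" and k: "2 \<le> k" "even k"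
    by (rule first_block)
  then obtain v' where w2: "w = alt X00 X01 k @ alt X10 X01 (k - 1) @ X11 # v'"
    by (rule second_block)
  obtain j where "k = 2 * j" using k(2) by (rule evenE)
  with k(1) have "k = 2 * (j - 1) + 2" by simp
  then show ?thesis using third_block[of "j - 1" v'] w2 by auto
qed

end

lemma R_reduced_decompose:
  assumes red: "distinct_adj w" and wR: "w \<in> R_set" and len: "2 \<le> length w"
  obtains x r g where "w = x @ r" "x \<in> R_set" "2 \<le> length x" "rd (gen g @ last x # r) = rd w"
proof -
  obtain a b t where w: "w = a # b # t" using len by (cases w rule: remdups_adj.cases) auto
  have "a \<noteq> b" using red w by simp
  have R: "rd (map h1 w) = rd (map h2 w)" "rd (map h2 w) = rd (map h3 w)" using wR by (auto simp: R_set_iff)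
  consider "a = X00" "b = X11" | "a = X11" "b = X00" | "a = X00" "b = X01" | "a = X11" "b = X10"
    | "a = X00" "b = X10" | "a = X11" "b = X01"
    using R_hd[OF wR] w \<open>a \<noteq> b\<close> by (cases a; cases b) auto
  then show ?thesis
  proof cases
    case 1
    then show ?thesis using that[of "[X00, X11]" t A] w by (auto simp: R_set_iff)
  next
    case 2
    then show ?thesis using that[of "[X11, X00]" t B] w by (auto simp: R_set_iff)
  next
    case 3
    then obtain i r where "w = pw i @ r" using starts_with_pw[OF red R] w by blast
    then show ?thesis
      using that[of "pw i" r "P i"] pw_in_R rd_absorb_last[of "pw i" r] by (simp add: length_pw)
  next
    case 4
    then have sw: "map sg w = X00 # X01 # map sg t" using w by simp
    have red': "distinct_adj (map sg w)"
      using red inj_on_subset[OF inj_sg subset_UNIV] by (intro distinct_adj_mapI)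
    have "rd (map h1 (map sg w)) = rd (map h2 (map sg w))" "rd (map h2 (map sg w)) = rd (map h3 (map sg w))"
      using R_sg[OF wR] unfolding R_set_iff by blast+
    then obtain i r where "map sg w = pw i @ r" using starts_with_pw[OF red' _ _ sw] by blast
    then have "w = qw i @ map sg r" by (metis map_append map_sg_sg sg_pw)
    then show ?thesis
      using that[of "qw i" "map sg r" "Q i"] qw_in_R rd_absorb_last[of "qw i" "map sg r"]
      by (simp add: qw_alt)
  qed (use R_second_letter[OF wR w] in auto)
qed

lemma R_reduced_generated:
  "distinct_adj w \<Longrightarrow> w \<in> R_set \<Longrightarrow> \<exists>u. u \<noteq> [] \<and> rd (evalY u) = rd w"
proof (induction "length w" arbitrary: w rule: less_induct)
  case less
  show ?case
  proof (cases "2 \<le> length w")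
    case False
    moreover have "w \<noteq> []" using less.prems(2) by (simp add: R_set_iff)
    ultimately obtain a where "w = [a]" by (cases w) (auto simp: Suc_le_eq)
    then have "w = [X00] \<or> w = [X11]" using R_hd[OF less.prems(2)] by auto
    then show ?thesis
    proof
      assume "w = [X00]" then show ?thesis by (intro exI[of _ "[A]"]) (simp add: evalY_def)
    next
      assume "w = [X11]" then show ?thesis by (intro exI[of _ "[B]"]) (simp add: evalY_def)
    qed
  next
    case True
    then obtain x r g where w: "w = x @ r" and x: "x \<in> R_set" "2 \<le> length x"
      and gen_g: "rd (gen g @ last x # r) = rd w"
      using R_reduced_decompose[OF less.prems] by blast
    have "last x # r \<in> R_set" using R_peel x(1) less.prems(2) w by blast
    moreover have "distinct_adj (last x # r)"
    proof -
      have "w = butlast x @ last x # r" using w x(2) by (cases x rule: rev_cases) auto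
      then show ?thesis using less.prems(1) by (metis distinct_adj_appendD2)
    qed
    moreover have "length (last x # r) < length w" using w x(2) by simp
    ultimately obtain u where u: "u \<noteq> []" "rd (evalY u) = rd (last x # r)"
      using less.hyps by blast
    have "rd (evalY (g # u)) = rd (gen g @ last x # r)"
      unfolding evalY_Cons by (rule rd_append_cong) (simp_all add: u(2))
    then show ?thesis using gen_g by (metis list.distinct(1))
  qed
qed

lemma R_generated: "w \<in> R_set \<Longrightarrow> \<exists>u. u \<noteq> [] \<and> F_eq (evalY u) w"
proof -
  assume wR: "w \<in> R_set"
  have rr: "rd (rd w) = rd w" by (simp add: distinct_adj_altdef[symmetric])
  have img: "rd (map h (rd w)) = rd (map h w)" for h by (rule rd_map_cong[OF rr])
  have "rd w \<in> R_set" using wR img[of h1] img[of h2] img[of h3] by (simp add: R_set_iff)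
  then obtain u where "u \<noteq> []" "rd (evalY u) = rd (rd w)"
    using R_reduced_generated distinct_adj_remdups_adj by blast
  then show ?thesis using rr by (auto simp: idem_eq_iff)
qed


theorem lemma11p4:
  shows "(\<forall>u. u \<noteq> [] \<longrightarrow> evalY u \<in> R_set)
    \<and> (\<forall>w \<in> R_set. \<exists>u. u \<noteq> [] \<and> F_eq (evalY u) w)
    \<and> (\<forall>u v. u \<noteq> [] \<longrightarrow> v \<noteq> [] \<longrightarrow> (F_eq (evalY u) (evalY v) \<longleftrightarrow> pres_eq R_rels u v))
    \<and> (\<forall>u. u \<noteq> [] \<longrightarrow> (\<exists>!v. nf v \<and> pres_eq R_rels u v))"
proof -
  have "F_eq (evalY u) (evalY v) \<longleftrightarrow> pres_eq R_rels u v" if "u \<noteq> []" "v \<noteq> []" for u v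
    using F_eq_imp_pres_eq[OF that] pres_eq_evalY by blast
  then show ?thesis using evalY_in_R R_generated unique_nf by blast
qed

end
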